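(* Let $X$ be a semigroup and $Z\subset X$ a subsemigroup such that $X\setminus Z$ is an ideal in $X$. If $\mathcal A\in\upsilon(Z)\subset\upsilon(X)$ and $\mathcal B\in\upsilon(X)$ satisfy $\mathcal A=\mathcal A*\mathcal B*\mathcal A$, then $\mathcal A=\mathcal A*\mathcal B_Z*\mathcal A$, where $\mathcal B_Z=\{B\in\mathcal B: B\subset Z\}\in\upsilon(Z)$.
   Context: An upfamily on a set $X$ is a family of nonempty subsets of $X$ closed under taking supersets in $X$; $\upsilon(X)$ is the set of all upfamilies, with operation $\mathcal A*\mathcal B=\big\langle \bigcup_{a\in A} a*B_a : A\in\mathcal A,\ \{B_a\}_{a\in A}\subset\mathcal B\big\rangle$, where $\langle\mathcal C\rangle=\{A\subset X:\exists C\in\mathcal C,\ C\subset A\}$. For $Z\subset X$, $\upsilon(Z)$ is identified with the subset $\{\{A\subset X: A\cap Z\in\mathcal F\}:\mathcal F\in\upsilon(Z)\}$ of $\upsilon(X)$ (the image under the map induced by inclusion), i.e. upfamilies on $X$ having a member contained in $Z$ and generated by their members contained in $Z$. A nonempty subset $I$ of a semigroup $X$ is an ideal if $XI\cup IX\subset I$. *)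

theory Defs
  imports Main
begin

text \<open>The semigroup X is the carrier type 'a of class semigroup_mult.\<close>

definition upfamily_on :: "'a set \<Rightarrow> 'a set set \<Rightarrow> bool" where
  "upfamily_on X F \<longleftrightarrow> F \<subseteq> Pow X \<and> (\<forall>A\<in>F. A \<noteq> {}) \<and>
     (\<forall>A B. A \<in> F \<longrightarrow> A \<subseteq> B \<longrightarrow> B \<subseteq> X \<longrightarrow> B \<in> F)"

definition gen :: "'a set set \<Rightarrow> 'a set set" where
  "gen C = {A. \<exists>C0\<in>C. C0 \<subseteq> A}"

definition upmul :: "'a::semigroup_mult set set \<Rightarrow> 'a set set \<Rightarrow> 'a set set" where
  "upmul \<A> \<B> = gen {(\<Union>a\<in>A. (\<lambda>b. a * b) ` Bf a) | A Bf. A \<in> \<A> \<and> (\<forall>a\<in>A. Bf a \<in> \<B>)}"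

text \<open>Image of an upfamily on Z in the upfamilies on X = UNIV.\<close>
definition embed_up :: "'a set \<Rightarrow> 'a set set \<Rightarrow> 'a set set" where
  "embed_up Z F = {A. A \<inter> Z \<in> F}"

definition in_ups :: "'a set \<Rightarrow> 'a set set \<Rightarrow> bool" where
  "in_ups Z \<A> \<longleftrightarrow> (\<exists>F. upfamily_on Z F \<and> \<A> = embed_up Z F)"

definition sg_ideal :: "'a::semigroup_mult set \<Rightarrow> bool" where
  "sg_ideal I \<longleftrightarrow> I \<noteq> {} \<and> (\<forall>x y. y \<in> I \<longrightarrow> x * y \<in> I \<and> y * x \<in> I)"

definition restr_up :: "'a set \<Rightarrow> 'a set set \<Rightarrow> 'a set set" where
  "restr_up Z \<B> = {B \<in> \<B>. B \<subseteq> Z}"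

end

theory Submission
  imports Defs
begin

(*
  Let B_Z be the members of \<B> contained in Z, and B' = embed_up Z B_Z its image
  as an upfamily on X.  Since B' \<subseteq> \<B> and the product of upfamilies is monotone,
  A*B'*A \<subseteq> A*B*A = A.  For the converse, take S \<in> A; then S \<inter> Z \<in> A = A*B*A, so
  S \<inter> Z contains a union of sets a*b*Af(a*b) with a \<in> A0 \<in> A and b \<in> Bf a \<in> \<B>.
  Every Af(a*b) is nonempty, so a*b*d \<in> Z for some d, and as X - Z is an ideal
  this forces b \<in> Z.  Hence all the Bf a already lie in B_Z, which exhibits
  S \<inter> Z as a member of A*B_Z*A \<subseteq> A*B'*A; upward closure then gives S.
*)

lemma upmulI:
  assumes "A0 \<in> \<A>" "\<forall>a\<in>A0. Bf a \<in> \<B>" "(\<Union>a\<in>A0. (\<lambda>b. a * b) ` Bf a) \<subseteq> S"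
  shows "S \<in> upmul \<A> \<B>"
  using assms unfolding upmul_def gen_def by blast

lemma upmulE:
  assumes "S \<in> upmul \<A> \<B>"
  obtains A0 Bf where "A0 \<in> \<A>" "\<forall>a\<in>A0. Bf a \<in> \<B>"
    "(\<Union>a\<in>A0. (\<lambda>b. a * b) ` Bf a) \<subseteq> S"
  using assms unfolding upmul_def gen_def by blast

lemma upmul_mono:
  assumes "\<A> \<subseteq> \<A>'" "\<B> \<subseteq> \<B>'"
  shows "upmul \<A> \<B> \<subseteq> upmul \<A>' \<B>'"
proof
  fix S assume "S \<in> upmul \<A> \<B>"
  then obtain A0 Bf where "A0 \<in> \<A>" "\<forall>a\<in>A0. Bf a \<in> \<B>"
      "(\<Union>a\<in>A0. (\<lambda>b. a * b) ` Bf a) \<subseteq> S"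
    by (rule upmulE)
  with assms show "S \<in> upmul \<A>' \<B>'" by (intro upmulI[of A0 _ Bf]) auto
qed

lemma upmul_superset:
  assumes "S \<in> upmul \<A> \<B>" "S \<subseteq> T"
  shows "T \<in> upmul \<A> \<B>"
  using assms by (elim upmulE) (rule upmulI, assumption+, blast)

lemma middle_factor_in:
  assumes "sg_ideal (UNIV - Z)" "a * b * d \<in> Z"
  shows "b \<in> Z"
proof (rule ccontr)
  assume "b \<notin> Z"
  then have "a * b \<notin> Z" using assms(1) unfolding sg_ideal_def by blast
  then show False using assms unfolding sg_ideal_def by blast
qed

lemma factor_restrict:
  assumes ideal: "sg_ideal (UNIV - Z)"
    and ne: "\<And>X. X \<in> \<C> \<Longrightarrow> X \<noteq> {}"
    and S: "S \<in> upmul (upmul \<A> \<B>) \<C>" "S \<subseteq> Z"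
  shows "S \<in> upmul (upmul \<A> (restr_up Z \<B>)) \<C>"
proof -
  obtain C Af where C: "C \<in> upmul \<A> \<B>" "\<forall>c\<in>C. Af c \<in> \<C>"
      and CS: "(\<Union>c\<in>C. (\<lambda>d. c * d) ` Af c) \<subseteq> S"
    using S(1) by (rule upmulE)
  obtain A0 Bf where A0: "A0 \<in> \<A>" "\<forall>a\<in>A0. Bf a \<in> \<B>"
      and A0C: "(\<Union>a\<in>A0. (\<lambda>b. a * b) ` Bf a) \<subseteq> C"
    using C(1) by (rule upmulE)
  have Bf_in_Z: "Bf a \<subseteq> Z" if a: "a \<in> A0" for a
  proof
    fix b assume b: "b \<in> Bf a"
    then have ab: "a * b \<in> C" using A0C a by blast
    then obtain d where "d \<in> Af (a * b)" using C(2) ne by blast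
    then have "a * b * d \<in> Z" using CS ab S(2) by blast
    with ideal show "b \<in> Z" by (rule middle_factor_in)
  qed
  let ?C0 = "\<Union>a\<in>A0. (\<lambda>b. a * b) ` Bf a"
  have "?C0 \<in> upmul \<A> (restr_up Z \<B>)"
    using A0 Bf_in_Z by (intro upmulI[of A0 _ Bf]) (auto simp: restr_up_def)
  moreover have "\<forall>c\<in>?C0. Af c \<in> \<C>" using C(2) A0C by blast
  moreover have "(\<Union>c\<in>?C0. (\<lambda>d. c * d) ` Af c) \<subseteq> S" using CS A0C by blast
  ultimately show ?thesis by (rule upmulI)
qed

lemma restr_up_subset_embed: "restr_up Z \<B> \<subseteq> embed_up Z (restr_up Z \<B>)"
  by (auto simp: restr_up_def embed_up_def Int_absorb2)

lemma embed_restr_subset: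
  assumes "upfamily_on UNIV \<B>"
  shows "embed_up Z (restr_up Z \<B>) \<subseteq> \<B>"
  using assms unfolding upfamily_on_def embed_up_def restr_up_def by blast

lemma in_ups_nonempty: "in_ups Z \<A> \<Longrightarrow> X \<in> \<A> \<Longrightarrow> X \<noteq> {}"
  unfolding in_ups_def upfamily_on_def embed_up_def by blast

lemma in_ups_Int: "in_ups Z \<A> \<Longrightarrow> S \<in> \<A> \<Longrightarrow> S \<inter> Z \<in> \<A>"
  unfolding in_ups_def embed_up_def by (auto simp: Int_assoc)

theorem lemma3p3:
  fixes Z :: "'a::semigroup_mult set" and \<A> \<B> :: "'a set set"
  assumes "\<forall>x\<in>Z. \<forall>y\<in>Z. x * y \<in> Z"
    and "sg_ideal (UNIV - Z)"
    and "in_ups Z \<A>"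
    and "upfamily_on UNIV \<B>"
    and "\<A> = upmul (upmul \<A> \<B>) \<A>"
  shows "\<A> = upmul (upmul \<A> (embed_up Z (restr_up Z \<B>))) \<A>"
proof
  let ?B' = "embed_up Z (restr_up Z \<B>)"
  have "upmul (upmul \<A> ?B') \<A> \<subseteq> upmul (upmul \<A> \<B>) \<A>"
    using embed_restr_subset[OF assms(4)] by (intro upmul_mono order_refl)
  with assms(5) show "upmul (upmul \<A> ?B') \<A> \<subseteq> \<A>" by simp
  show "\<A> \<subseteq> upmul (upmul \<A> ?B') \<A>"
  proof
    fix S assume "S \<in> \<A>"
    then have SZ: "S \<inter> Z \<in> upmul (upmul \<A> \<B>) \<A>"
      using in_ups_Int[OF assms(3)] assms(5) by simp
    have "S \<inter> Z \<in> upmul (upmul \<A> (restr_up Z \<B>)) \<A>"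
      using factor_restrict[OF assms(2) in_ups_nonempty[OF assms(3)] SZ] by blast
    also have "\<dots> \<subseteq> upmul (upmul \<A> ?B') \<A>"
      by (intro upmul_mono order_refl restr_up_subset_embed)
    finally show "S \<in> upmul (upmul \<A> ?B') \<A>"
      by (rule upmul_superset) blast
  qed
qed

end
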